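(* Let $\Delta\ge 3$ be an integer and let $G\in\mathcal{G}_\Delta$. Let $c_1,\dots,c_\Delta$ be real numbers with $0<c_\Delta\le \frac{2}{2\Delta+1}$ and $c_i=\min\left\{\frac{1-c_{i+1}}{i},\frac{2}{2i+1}\right\}$ for $1\le i\le \Delta-1$. Then $$\alpha(G)\ge \sum_{i=1}^{\Delta} c_i|V_i(G)|.$$
   Context: All graphs are simple, finite and undirected. For an integer $\Delta\ge 3$, $\mathcal{G}_\Delta$ denotes the set of connected graphs $G\neq K_{\Delta+1}$ with maximum degree $\Delta$. For a graph $G$ and $i\ge 1$, $V_i(G)$ is the set of vertices of $G$ of degree $i$. $\alpha(G)$ is the independence number of $G$ (maximum size of a set of pairwise non-adjacent vertices). *)

theory Defs
  imports Complex_Main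
begin

definition simple_graph :: "'a set \<Rightarrow> 'a set set \<Rightarrow> bool" where
  "simple_graph V E \<longleftrightarrow> finite V \<and> (\<forall>e\<in>E. e \<subseteq> V \<and> card e = 2)"

definition adj :: "'a set set \<Rightarrow> 'a \<Rightarrow> 'a \<Rightarrow> bool" where
  "adj E u v \<longleftrightarrow> {u, v} \<in> E"

definition neighbours :: "'a set \<Rightarrow> 'a set set \<Rightarrow> 'a \<Rightarrow> 'a set" where
  "neighbours V E v = {u \<in> V. adj E v u}"

definition degree :: "'a set \<Rightarrow> 'a set set \<Rightarrow> 'a \<Rightarrow> nat" where
  "degree V E v = card (neighbours V E v)"

definition max_degree :: "'a set \<Rightarrow> 'a set set \<Rightarrow> nat" where
  "max_degree V E = Max (degree V E ` V)"

definition connected_graph :: "'a set \<Rightarrow> 'a set set \<Rightarrow> bool" where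
  "connected_graph V E \<longleftrightarrow> V \<noteq> {} \<and>
     (\<forall>u\<in>V. \<forall>v\<in>V. (\<lambda>x y. x \<in> V \<and> y \<in> V \<and> adj E x y)\<^sup>*\<^sup>* u v)"

definition complete_graph :: "'a set \<Rightarrow> 'a set set \<Rightarrow> bool" where
  "complete_graph V E \<longleftrightarrow> (\<forall>u\<in>V. \<forall>v\<in>V. u \<noteq> v \<longrightarrow> adj E u v)"

definition is_complete_on :: "nat \<Rightarrow> 'a set \<Rightarrow> 'a set set \<Rightarrow> bool" where
  "is_complete_on n V E \<longleftrightarrow> card V = n \<and> complete_graph V E"

definition in_G_Delta :: "nat \<Rightarrow> 'a set \<Rightarrow> 'a set set \<Rightarrow> bool" where
  "in_G_Delta \<Delta> V E \<longleftrightarrow> simple_graph V E \<and> connected_graph V E \<and>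
     max_degree V E = \<Delta> \<and> \<not> is_complete_on (\<Delta> + 1) V E"

definition V_deg :: "'a set \<Rightarrow> 'a set set \<Rightarrow> nat \<Rightarrow> 'a set" where
  "V_deg V E i = {v \<in> V. degree V E v = i}"

definition independent_set :: "'a set \<Rightarrow> 'a set set \<Rightarrow> 'a set \<Rightarrow> bool" where
  "independent_set V E S \<longleftrightarrow> S \<subseteq> V \<and> (\<forall>u\<in>S. \<forall>v\<in>S. \<not> adj E u v)"

definition independence_number :: "'a set \<Rightarrow> 'a set set \<Rightarrow> nat" where
  "independence_number V E = Max (card ` {S. independent_set V E S})"

end

(*
  Weighted greedy deletion. Give every vertex v the weight c_(deg v) and show, by induction on
  the number of vertices, that some independent set is at least as large as the total weight.
  Deletions create graphs with complete components K_(j+1), whose vertices may weigh more than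
  c_j; the invariant therefore only asks such a component to weigh at most 1 in total.

  Each step deletes a set X and adds to the independent set a set S of vertices whose closed
  neighbourhoods lie in X, with weight(X) <= |S|: a complete component and one of its vertices;
  otherwise, for v of minimum degree d, either N[v] and v when v has a neighbour of larger degree
  (weight <= d c_d + c_(d+1) <= 1), or N[v] and N[w] and the pair v, w for a vertex w at distance
  two (weight <= (2d+1) c_d <= 2). Degrees only drop and c is decreasing, so the invariant
  survives the deletion; a complete component K_(j+1) created by it contains a vertex whose
  degree dropped, so it weighs at most j c_j + c_(j+1) <= 1. A graph in the class G_Delta has no
  complete component at all, and the recursion defining c yields exactly the inequalities used.
*)
theory Submission
  imports Defs
begin

definition closed_neighbours :: "'a set \<Rightarrow> 'a set set \<Rightarrow> 'a \<Rightarrow> 'a set" where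
  "closed_neighbours V E v = insert v (neighbours V E v)"

text \<open>The component of \<open>v\<close> is the complete graph on its closed neighbourhood.\<close>
definition in_complete_component :: "'a set \<Rightarrow> 'a set set \<Rightarrow> 'a \<Rightarrow> bool" where
  "in_complete_component V E v \<longleftrightarrow>
     (\<forall>u\<in>neighbours V E v. closed_neighbours V E u = closed_neighbours V E v)"

lemma adj_commute: "adj E u v = adj E v u"
  by (simp add: adj_def insert_commute)

lemma neighbours_Diff: "neighbours (V - X) E v = neighbours V E v - X"
  by (auto simp: neighbours_def)

lemma finite_neighbours: "finite V \<Longrightarrow> finite (neighbours V E v)"
  by (simp add: neighbours_def)

lemma neighbours_subset: "neighbours V E v \<subseteq> V"
  by (auto simp: neighbours_def)

lemma not_in_neighbours_self: "{v} \<notin> E \<Longrightarrow> v \<notin> neighbours V E v"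
  by (simp add: neighbours_def adj_def)

lemma closed_neighbours_subset: "v \<in> V \<Longrightarrow> closed_neighbours V E v \<subseteq> V"
  using neighbours_subset by (fastforce simp: closed_neighbours_def)

lemma finite_closed_neighbours: "finite V \<Longrightarrow> finite (closed_neighbours V E v)"
  by (simp add: closed_neighbours_def finite_neighbours)

lemma card_closed_neighbours:
  "finite V \<Longrightarrow> {v} \<notin> E \<Longrightarrow> card (closed_neighbours V E v) = degree V E v + 1"
  by (simp add: closed_neighbours_def degree_def finite_neighbours not_in_neighbours_self)

lemma degree_Diff_le: "finite V \<Longrightarrow> degree (V - X) E v \<le> degree V E v"
  unfolding degree_def neighbours_Diff by (intro card_mono) (auto simp: finite_neighbours)

lemma degree_ge_1_if_not_in_complete_component:
  assumes "finite V" and "\<not> in_complete_component V E v"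
  shows "1 \<le> degree V E v"
  using assms finite_neighbours[OF assms(1), of E v]
  by (auto simp: degree_def in_complete_component_def Suc_le_eq card_gt_0_iff)

lemma degree_eq_if_in_complete_component:
  assumes "finite V" and "\<forall>v\<in>V. {v} \<notin> E" and "in_complete_component V E v"
    and "u \<in> closed_neighbours V E v" and "v \<in> V"
  shows "degree V E u = degree V E v"
proof -
  have "closed_neighbours V E u = closed_neighbours V E v"
  proof (cases "u = v")
    case False
    then have "u \<in> neighbours V E v" using assms(4) by (simp add: closed_neighbours_def)
    then show ?thesis using assms(3) unfolding in_complete_component_def by blast
  qed simp
  moreover have "u \<in> V" using assms(4) closed_neighbours_subset[OF assms(5)] by blast
  ultimately show ?thesis
    using card_closed_neighbours[OF assms(1), of u E] card_closed_neighbours[OF assms(1), of v E]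
      assms(2,5) by simp
qed

lemma complete_component_Diff_degree_drop:
  assumes fin: "finite V" and noloop: "\<forall>v\<in>V. {v} \<notin> E"
    and y: "y \<in> V - X" and not_complete: "\<not> in_complete_component V E y"
    and complete: "in_complete_component (V - X) E y"
  shows "\<exists>z\<in>closed_neighbours (V - X) E y. degree (V - X) E y < degree V E z"
proof (rule ccontr)
  let ?K = "closed_neighbours (V - X) E y"
  assume "\<not> ?thesis"
  then have no_drop: "degree V E z \<le> degree (V - X) E z" if "z \<in> ?K" for z
    using degree_eq_if_in_complete_component[of "V - X" E y z] fin noloop y complete that
    by fastforce
  then have same: "neighbours V E z = neighbours (V - X) E z" if "z \<in> ?K" for z
  proof -
    have "neighbours (V - X) E z \<subseteq> neighbours V E z" by (auto simp: neighbours_Diff)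
    then show ?thesis
      using card_seteq[OF finite_neighbours[OF fin]] no_drop[OF that] by (metis degree_def)
  qed
  have "in_complete_component V E y"
    unfolding in_complete_component_def
  proof
    fix u assume "u \<in> neighbours V E y"
    then have u: "u \<in> neighbours (V - X) E y" using same[of y] by (simp add: closed_neighbours_def)
    then have "u \<in> ?K" by (simp add: closed_neighbours_def)
    have "closed_neighbours V E u = closed_neighbours (V - X) E u"
      using same[OF \<open>u \<in> ?K\<close>] by (simp add: closed_neighbours_def)
    also have "\<dots> = ?K" using complete u by (simp add: in_complete_component_def)
    also have "\<dots> = closed_neighbours V E y" using same[of y] by (simp add: closed_neighbours_def)
    finally show "closed_neighbours V E u = closed_neighbours V E y" .
  qed
  with not_complete show False by simp
qed

lemma separated_Diff:
  assumes sep: "\<forall>y\<in>V - X. neighbours V E y \<inter> X = {}" and y: "y \<in> V - X"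
  shows "neighbours (V - X) E y = neighbours V E y"
    and "closed_neighbours (V - X) E y = closed_neighbours V E y"
    and "degree (V - X) E y = degree V E y"
    and "in_complete_component (V - X) E y \<longleftrightarrow> in_complete_component V E y"
proof -
  have same: "neighbours (V - X) E u = neighbours V E u" if "u \<in> V - X" for u
    using sep that by (auto simp: neighbours_Diff)
  show "neighbours (V - X) E y = neighbours V E y" using same[OF y] .
  then show "closed_neighbours (V - X) E y = closed_neighbours V E y"
    and "degree (V - X) E y = degree V E y"
    by (simp_all add: closed_neighbours_def degree_def)
  have "u \<in> V - X" if "u \<in> neighbours V E y" for u
    using that sep y neighbours_subset[of V E y] by auto
  then show "in_complete_component (V - X) E y \<longleftrightarrow> in_complete_component V E y"
    unfolding in_complete_component_def closed_neighbours_def using same[OF y] same by auto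
qed

lemma complete_component_separated:
  assumes "in_complete_component V E v"
  shows "\<forall>y\<in>V - closed_neighbours V E v. neighbours V E y \<inter> closed_neighbours V E v = {}"
proof (intro ballI equalityI subsetI)
  fix y u assume y: "y \<in> V - closed_neighbours V E v"
    and u: "u \<in> neighbours V E y \<inter> closed_neighbours V E v"
  then have y_nb: "y \<in> neighbours V E u" using adj_commute[of E] by (auto simp: neighbours_def)
  show "u \<in> {}"
  proof (cases "u = v")
    case False
    then have "u \<in> neighbours V E v" using u by (simp add: closed_neighbours_def)
    then have "closed_neighbours V E u = closed_neighbours V E v"
      using assms unfolding in_complete_component_def by blast
    then show ?thesis using y y_nb by (auto simp: closed_neighbours_def)
  qed (use y y_nb in \<open>simp add: closed_neighbours_def\<close>)
qed simp

lemma independent_set_extend: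
  assumes fin: "finite V" and XV: "X \<subseteq> V"
    and S: "independent_set V E S" "S \<subseteq> X" "\<forall>s\<in>S. neighbours V E s \<subseteq> X"
    and S': "independent_set (V - X) E S'"
  shows "independent_set V E (S \<union> S')" and "card (S \<union> S') = card S + card S'"
proof -
  have S'_sub: "S' \<subseteq> V - X" using S' by (simp add: independent_set_def)
  have "\<not> adj E u v" if "u \<in> S" "v \<in> S'" for u v
    using that S'_sub S(3) by (auto simp: neighbours_def)
  then show "independent_set V E (S \<union> S')"
    using S(1) S' adj_commute[of E] unfolding independent_set_def by blast
  have "finite S" "finite S'"
    using S(1) S'_sub fin by (auto simp: independent_set_def intro: finite_subset)
  moreover have "S \<inter> S' = {}" using S(2) S'_sub by auto
  ultimately show "card (S \<union> S') = card S + card S'" by (rule card_Un_disjoint)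
qed

lemma exists_nonadjacent_at_distance_two:
  assumes fin: "finite V" and noloop: "\<forall>v\<in>V. {v} \<notin> E" and v: "v \<in> V"
    and not_complete: "\<not> in_complete_component V E v"
    and nb_degree: "\<forall>u\<in>neighbours V E v. degree V E v \<le> degree V E u"
  obtains u w where "u \<in> neighbours V E v" "w \<in> neighbours V E u" "w \<noteq> v" "\<not> adj E v w"
proof -
  obtain u where u: "u \<in> neighbours V E v"
    and ne: "closed_neighbours V E u \<noteq> closed_neighbours V E v"
    using not_complete unfolding in_complete_component_def by blast
  have uV: "u \<in> V" using u neighbours_subset[of V E v] by blast
  have "card (closed_neighbours V E v) \<le> card (closed_neighbours V E u)"
    using card_closed_neighbours[OF fin] noloop uV v nb_degree u by simp
  then have "\<not> closed_neighbours V E u \<subseteq> closed_neighbours V E v"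
    using ne card_seteq[OF finite_closed_neighbours[OF fin]] by metis
  then obtain w where w: "w \<in> closed_neighbours V E u" "w \<notin> closed_neighbours V E v" by blast
  have "w \<noteq> u" using w(2) u by (auto simp: closed_neighbours_def)
  then have "w \<in> neighbours V E u" using w(1) by (simp add: closed_neighbours_def)
  moreover have "w \<noteq> v" "\<not> adj E v w"
    using w(2) \<open>w \<in> neighbours V E u\<close> by (auto simp: closed_neighbours_def neighbours_def)
  ultimately show thesis using that u by blast
qed

locale degree_weights =
  fixes D :: nat and c :: "nat \<Rightarrow> real"
  assumes antitone: "1 \<le> i \<Longrightarrow> i \<le> j \<Longrightarrow> j \<le> D \<Longrightarrow> c j \<le> c i"
    and nonneg: "1 \<le> i \<Longrightarrow> i \<le> D \<Longrightarrow> 0 \<le> c i"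
    and pair_bound: "1 \<le> i \<Longrightarrow> i \<le> D \<Longrightarrow> (2 * real i + 1) * c i \<le> 2"
    and closed_neighbourhood_bound: "1 \<le> i \<Longrightarrow> i < D \<Longrightarrow> real i * c i + c (i + 1) \<le> 1"
begin

text \<open>The induction invariant: a complete component contributes exactly one vertex to an
  independent set, so it may carry total weight 1 whatever the degrees of its vertices.\<close>
definition admissible :: "'a set \<Rightarrow> 'a set set \<Rightarrow> ('a \<Rightarrow> real) \<Rightarrow> bool" where
  "admissible V E f \<longleftrightarrow> (\<forall>y\<in>V.
     (in_complete_component V E y \<longrightarrow> sum f (closed_neighbours V E y) \<le> 1) \<and>
     (\<not> in_complete_component V E y \<longrightarrow> f y \<le> c (degree V E y)))"

definition reduction :: "'a set \<Rightarrow> 'a set set \<Rightarrow> ('a \<Rightarrow> real) \<Rightarrow> 'a set \<Rightarrow> 'a set \<Rightarrow> bool" where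
  "reduction V E f X S \<longleftrightarrow> X \<subseteq> V \<and> X \<noteq> {} \<and> independent_set V E S \<and> S \<subseteq> X \<and>
     (\<forall>s\<in>S. neighbours V E s \<subseteq> X) \<and> sum f X \<le> real (card S) \<and> admissible (V - X) E f"

lemma weight_le_c:
  assumes "f x \<le> c d" and "1 \<le> j" and "j \<le> d" and "d \<le> D"
  shows "f x \<le> c j"
  using assms antitone[of j d] by linarith

lemma admissible_Diff_separated:
  assumes "\<forall>y\<in>V - X. neighbours V E y \<inter> X = {}" and "admissible V E f"
  shows "admissible (V - X) E f"
  using assms separated_Diff[OF assms(1)] by (simp add: admissible_def)

lemma complete_component_Diff_weight:
  assumes fin: "finite V" and noloop: "\<forall>v\<in>V. {v} \<notin> E"
    and deg_le: "\<forall>v\<in>V. degree V E v \<le> D"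
    and no_complete: "\<forall>v\<in>V. \<not> in_complete_component V E v"
    and weight: "\<forall>v\<in>V. f v \<le> c (degree V E v)"
    and y: "y \<in> V - X" and complete: "in_complete_component (V - X) E y"
  shows "sum f (closed_neighbours (V - X) E y) \<le> 1"
proof -
  define K where "K = closed_neighbours (V - X) E y"
  define j where "j = degree (V - X) E y"
  have finK: "finite K" using fin by (simp add: K_def finite_closed_neighbours)
  have KV: "K \<subseteq> V - X" using y by (simp add: K_def closed_neighbours_subset)
  have cardK: "card K = j + 1"
    using card_closed_neighbours[of "V - X" y E] fin noloop y by (simp add: K_def j_def)
  have le_j: "f x \<le> c j" if "x \<in> K" "1 \<le> j" for x
  proof -
    have "degree (V - X) E x = j"
      using degree_eq_if_in_complete_component[of "V - X" E y x] fin noloop y complete that(1)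
      by (simp add: K_def j_def)
    then have "j \<le> degree V E x" using degree_Diff_le[OF fin] by metis
    moreover have "x \<in> V" using that(1) KV by blast
    ultimately show ?thesis using weight_le_c[of f x "degree V E x" j] weight deg_le that(2) by blast
  qed
  obtain z where z: "z \<in> K" and z_deg: "j < degree V E z"
    using complete_component_Diff_degree_drop[OF fin noloop y _ complete] no_complete y
    by (auto simp: K_def j_def)
  have zV: "z \<in> V" using z KV by blast
  show ?thesis
  proof (cases "j = 0")
    case True
    then have "K = {y}" using cardK by (simp add: K_def closed_neighbours_def card_1_singleton_iff)
    moreover have "f y \<le> c 1"
      using weight_le_c[of f y] weight deg_le no_complete y
        degree_ge_1_if_not_in_complete_component[OF fin] by blast
    moreover have "c 1 \<le> 1" using pair_bound[of 1] z_deg deg_le zV True by fastforce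
    ultimately show ?thesis by (simp add: K_def)
  next
    case False
    have "sum f K = f z + sum f (K - {z})" using sum.remove[OF finK z] .
    also have "f z \<le> c (j + 1)"
      using weight_le_c[of f z "degree V E z" "j + 1"] weight deg_le zV z_deg by simp
    also have "sum f (K - {z}) \<le> real (card (K - {z})) * c j"
      using sum_bounded_above[of "K - {z}" f "c j"] le_j False by auto
    also have "card (K - {z}) = j" using cardK z finK by simp
    also have "c (j + 1) + real j * c j \<le> 1"
      using closed_neighbourhood_bound[of j] False z_deg deg_le zV by fastforce
    finally show ?thesis by (simp add: K_def)
  qed
qed

lemma admissible_Diff:
  assumes fin: "finite V" and noloop: "\<forall>v\<in>V. {v} \<notin> E"
    and deg_le: "\<forall>v\<in>V. degree V E v \<le> D"
    and no_complete: "\<forall>v\<in>V. \<not> in_complete_component V E v"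
    and adm: "admissible V E f"
  shows "admissible (V - X) E f"
  unfolding admissible_def
proof (intro ballI conjI impI)
  fix y assume y: "y \<in> V - X"
  have weight: "\<forall>v\<in>V. f v \<le> c (degree V E v)" using adm no_complete by (simp add: admissible_def)
  show "sum f (closed_neighbours (V - X) E y) \<le> 1" if "in_complete_component (V - X) E y"
    using complete_component_Diff_weight[OF fin noloop deg_le no_complete weight y that] .
  assume "\<not> in_complete_component (V - X) E y"
  then have "1 \<le> degree (V - X) E y"
    using fin by (intro degree_ge_1_if_not_in_complete_component) simp_all
  then show "f y \<le> c (degree (V - X) E y)"
    using weight_le_c[of f y "degree V E y"] weight deg_le y degree_Diff_le[OF fin] by simp
qed

lemma reduction_complete_component:
  assumes noloop: "\<forall>v\<in>V. {v} \<notin> E" and adm: "admissible V E f"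
    and v: "v \<in> V" and complete: "in_complete_component V E v"
  shows "reduction V E f (closed_neighbours V E v) {v}"
  unfolding reduction_def
proof (intro conjI)
  show "independent_set V E {v}" using v noloop by (simp add: independent_set_def adj_def)
  show "sum f (closed_neighbours V E v) \<le> real (card {v})"
    using adm v complete by (simp add: admissible_def)
  show "admissible (V - closed_neighbours V E v) E f"
    using admissible_Diff_separated[OF complete_component_separated[OF complete] adm] .
qed (use v closed_neighbours_subset[OF v] in \<open>auto simp: closed_neighbours_def\<close>)

lemma reduction_min_degree_closed_neighbourhood:
  assumes fin: "finite V" and noloop: "\<forall>v\<in>V. {v} \<notin> E"
    and deg_le: "\<forall>v\<in>V. degree V E v \<le> D"
    and no_complete: "\<forall>v\<in>V. \<not> in_complete_component V E v"
    and adm: "admissible V E f"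
    and v: "v \<in> V" and min: "\<forall>x\<in>V. degree V E v \<le> degree V E x"
    and u: "u \<in> neighbours V E v" and u_deg: "degree V E v < degree V E u"
  shows "reduction V E f (closed_neighbours V E v) {v}"
proof -
  define \<delta> where "\<delta> = degree V E v"
  have weight: "\<forall>x\<in>V. f x \<le> c (degree V E x)" using adm no_complete by (simp add: admissible_def)
  have \<delta>_ge_1: "1 \<le> \<delta>"
    using degree_ge_1_if_not_in_complete_component[OF fin] no_complete v by (simp add: \<delta>_def)
  have uV: "u \<in> V" using u neighbours_subset[of V E v] by blast
  have \<delta>_less: "\<delta> < D" using u_deg deg_le uV by (fastforce simp: \<delta>_def)
  have le_c\<delta>: "f x \<le> c \<delta>" if "x \<in> V" for x
    using weight_le_c[of f x "degree V E x" \<delta>] weight deg_le min that \<delta>_ge_1 by (simp add: \<delta>_def)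
  have finN: "finite (neighbours V E v)" using finite_neighbours[OF fin] .
  have "sum f (closed_neighbours V E v) = f v + (f u + sum f (neighbours V E v - {u}))"
    using finN not_in_neighbours_self[of v E V] noloop v sum.remove[OF finN u]
    by (simp add: closed_neighbours_def)
  also have "f v \<le> c \<delta>" using le_c\<delta> v .
  also have "f u \<le> c (\<delta> + 1)"
    using weight_le_c[of f u "degree V E u" "\<delta> + 1"] weight deg_le uV u_deg by (simp add: \<delta>_def)
  also have "sum f (neighbours V E v - {u}) \<le> real (card (neighbours V E v - {u})) * c \<delta>"
    using sum_bounded_above[of "neighbours V E v - {u}" f "c \<delta>"] le_c\<delta> neighbours_subset[of V E v]
    by auto
  also have "card (neighbours V E v - {u}) = \<delta> - 1" using u finN by (simp add: \<delta>_def degree_def)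
  also have "c \<delta> + (c (\<delta> + 1) + real (\<delta> - 1) * c \<delta>) = real \<delta> * c \<delta> + c (\<delta> + 1)"
    using \<delta>_ge_1 by (simp add: of_nat_diff algebra_simps)
  also have "\<dots> \<le> 1" using closed_neighbourhood_bound[OF \<delta>_ge_1 \<delta>_less] .
  finally have "sum f (closed_neighbours V E v) \<le> real (card {v})" by simp
  moreover have "independent_set V E {v}" using v noloop by (simp add: independent_set_def adj_def)
  ultimately show ?thesis
    using v closed_neighbours_subset[OF v] admissible_Diff[OF fin noloop deg_le no_complete adm]
    by (auto simp: reduction_def closed_neighbours_def)
qed

lemma reduction_nonadjacent_pair:
  assumes fin: "finite V" and noloop: "\<forall>v\<in>V. {v} \<notin> E"
    and deg_le: "\<forall>v\<in>V. degree V E v \<le> D"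
    and no_complete: "\<forall>v\<in>V. \<not> in_complete_component V E v"
    and adm: "admissible V E f"
    and v: "v \<in> V" and w: "w \<in> V" and min: "\<forall>x\<in>V. degree V E v \<le> degree V E x"
    and w_deg: "degree V E w = degree V E v" and "v \<noteq> w" and nonadj: "\<not> adj E v w"
    and common: "u \<in> neighbours V E v" "u \<in> neighbours V E w"
  shows "reduction V E f (closed_neighbours V E v \<union> closed_neighbours V E w) {v, w}"
proof -
  define \<delta> where "\<delta> = degree V E v"
  define X where "X = closed_neighbours V E v \<union> closed_neighbours V E w"
  have weight: "\<forall>x\<in>V. f x \<le> c (degree V E x)" using adm no_complete by (simp add: admissible_def)
  have \<delta>_ge_1: "1 \<le> \<delta>"
    using degree_ge_1_if_not_in_complete_component[OF fin] no_complete v by (simp add: \<delta>_def)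
  have \<delta>_le: "\<delta> \<le> D" using deg_le v by (simp add: \<delta>_def)
  have XV: "X \<subseteq> V"
    using closed_neighbours_subset[OF v] closed_neighbours_subset[OF w] by (simp add: X_def)
  have "card X \<le> 2 * \<delta> + 1"
  proof -
    have "u \<in> closed_neighbours V E v \<inter> closed_neighbours V E w"
      using common by (simp add: closed_neighbours_def)
    then have "1 \<le> card (closed_neighbours V E v \<inter> closed_neighbours V E w)"
      using fin by (auto simp: finite_closed_neighbours card_gt_0_iff Suc_le_eq)
    then show ?thesis
      using card_Un_Int[OF finite_closed_neighbours[OF fin] finite_closed_neighbours[OF fin],
          of E v E w] card_closed_neighbours[OF fin] noloop v w w_deg
      by (simp add: X_def \<delta>_def)
  qed
  have "sum f X \<le> real (card X) * c \<delta>"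
    using sum_bounded_above[of X f "c \<delta>"] weight_le_c[of f _ _ \<delta>] weight deg_le min XV \<delta>_ge_1
    by (force simp: \<delta>_def)
  also have "\<dots> \<le> (2 * real \<delta> + 1) * c \<delta>"
    using \<open>card X \<le> 2 * \<delta> + 1\<close> nonneg[OF \<delta>_ge_1 \<delta>_le] by (intro mult_right_mono) simp_all
  also have "\<dots> \<le> 2" using pair_bound[OF \<delta>_ge_1 \<delta>_le] .
  finally have "sum f X \<le> real (card {v, w})" using \<open>v \<noteq> w\<close> by simp
  moreover have "independent_set V E {v, w}"
    using v w noloop nonadj adj_commute[of E] by (auto simp: independent_set_def adj_def)
  ultimately show ?thesis
    using XV admissible_Diff[OF fin noloop deg_le no_complete adm]
    by (auto simp: reduction_def X_def closed_neighbours_def)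
qed

lemma exists_reduction:
  assumes fin: "finite V" and ne: "V \<noteq> {}" and noloop: "\<forall>v\<in>V. {v} \<notin> E"
    and deg_le: "\<forall>v\<in>V. degree V E v \<le> D" and adm: "admissible V E f"
  shows "\<exists>X S. reduction V E f X S"
proof (cases "\<exists>v\<in>V. in_complete_component V E v")
  case True
  then show ?thesis using reduction_complete_component[OF noloop adm] by blast
next
  case False
  then have no_complete: "\<forall>v\<in>V. \<not> in_complete_component V E v" by blast
  define \<delta> where "\<delta> = Min (degree V E ` V)"
  have min: "\<forall>x\<in>V. \<delta> \<le> degree V E x" using fin by (simp add: \<delta>_def)
  note reductions = reduction_min_degree_closed_neighbourhood[OF fin noloop deg_le no_complete adm]
    reduction_nonadjacent_pair[OF fin noloop deg_le no_complete adm]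
  show ?thesis
  proof (cases "\<exists>v\<in>V. \<exists>u\<in>neighbours V E v. degree V E v = \<delta> \<and> \<delta> < degree V E u")
    case True
    then show ?thesis using reductions(1) min by metis
  next
    case False
    have "\<delta> \<in> degree V E ` V" unfolding \<delta>_def using fin ne by (intro Min_in) auto
    then obtain v where v: "v \<in> V" "degree V E v = \<delta>" by auto
    have nb_deg: "degree V E u = \<delta>" if "x \<in> V" "degree V E x = \<delta>" "u \<in> neighbours V E x" for x u
      using False min that neighbours_subset[of V E x] by force
    obtain u w where u: "u \<in> neighbours V E v" and w: "w \<in> neighbours V E u"
      and "w \<noteq> v" "\<not> adj E v w"
      using exists_nonadjacent_at_distance_two[OF fin noloop v(1)] no_complete v min
        neighbours_subset[of V E v] by blast
    have uV: "u \<in> V" using u neighbours_subset[of V E v] by blast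
    have wV: "w \<in> V" using w neighbours_subset[of V E u] by blast
    have "u \<in> neighbours V E w" using w uV by (simp add: neighbours_def adj_commute)
    moreover have "degree V E w = degree V E v" using nb_deg[OF uV nb_deg[OF v u] w] v(2) by simp
    ultimately show ?thesis
      using reductions(2)[OF v(1) wV _ _ \<open>w \<noteq> v\<close>[symmetric] \<open>\<not> adj E v w\<close> u] min v(2) by blast
  qed
qed

lemma exists_independent_set_weight:
  assumes "finite V" and "\<forall>v\<in>V. {v} \<notin> E" and "\<forall>v\<in>V. degree V E v \<le> D"
    and "admissible V E f"
  shows "\<exists>S. independent_set V E S \<and> sum f V \<le> real (card S)"
  using assms
proof (induction "card V" arbitrary: V rule: less_induct)
  case less
  note fin = less.prems(1)
  show ?case
  proof (cases "V = {}")
    case True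
    then show ?thesis by (intro exI[of _ "{}"]) (simp add: independent_set_def)
  next
    case False
    then obtain X S where red: "reduction V E f X S"
      using exists_reduction[OF fin _ less.prems(2-4)] by blast
    then have XV: "X \<subseteq> V" and "X \<noteq> {}" by (simp_all add: reduction_def)
    then have "card (V - X) < card V" using fin by (intro psubset_card_mono) auto
    moreover have "\<forall>v\<in>V - X. degree (V - X) E v \<le> D"
      using less.prems(3) degree_Diff_le[OF fin] le_trans by blast
    ultimately obtain S' where S': "independent_set (V - X) E S'" "sum f (V - X) \<le> real (card S')"
      using less.hyps[of "V - X"] less.prems red by (auto simp: reduction_def)
    have S: "independent_set V E S" "S \<subseteq> X" "\<forall>s\<in>S. neighbours V E s \<subseteq> X"
      using red by (simp_all add: reduction_def)
    have "sum f V = sum f X + sum f (V - X)" using sum.subset_diff[OF XV fin, of f] by simp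
    also have "\<dots> \<le> real (card S) + real (card S')" using red S'(2) by (simp add: reduction_def)
    also have "\<dots> = real (card (S \<union> S'))" using independent_set_extend(2)[OF fin XV S S'(1)] by simp
    finally show ?thesis
      using independent_set_extend(1)[OF fin XV S S'(1)] by blast
  qed
qed

end

lemma min_recursion_bounds:
  fixes \<Delta> :: nat and c :: "nat \<Rightarrow> real"
  assumes pos: "0 < c \<Delta>" and le: "c \<Delta> \<le> 2 / (2 * real \<Delta> + 1)"
    and rec: "\<And>i. 1 \<le> i \<Longrightarrow> i \<le> \<Delta> - 1 \<Longrightarrow>
           c i = min ((1 - c (i + 1)) / real i) (2 / (2 * real i + 1))"
    and i: "1 \<le> i" "i \<le> \<Delta>"
  shows "0 < c i \<and> c i \<le> 2 / (2 * real i + 1)"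
  using i(2)
proof (induction rule: inc_induct)
  case base
  then show ?case using pos le by simp
next
  case (step n)
  have "2 / (2 * real (Suc n) + 1) < 1" using step.hyps i(1) by (simp add: field_simps)
  then have "c (Suc n) < 1" using step.IH by linarith
  then have "0 < (1 - c (Suc n)) / real n" using step.hyps i(1) by simp
  then show ?case using rec[of n] step.hyps i(1) by simp
qed

lemma degree_weights_min_recursion:
  fixes \<Delta> :: nat and c :: "nat \<Rightarrow> real"
  assumes pos: "0 < c \<Delta>" and le: "c \<Delta> \<le> 2 / (2 * real \<Delta> + 1)"
    and rec: "\<And>i. 1 \<le> i \<Longrightarrow> i \<le> \<Delta> - 1 \<Longrightarrow>
           c i = min ((1 - c (i + 1)) / real i) (2 / (2 * real i + 1))"
  shows "degree_weights \<Delta> c"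
proof
  have bounds: "0 < c i \<and> c i \<le> 2 / (2 * real i + 1)" if "1 \<le> i" "i \<le> \<Delta>" for i
    using min_recursion_bounds[of c \<Delta> i] pos le rec that by blast
  have step: "real i * c i + c (i + 1) \<le> 1" if "1 \<le> i" "i < \<Delta>" for i
  proof -
    have "c i \<le> (1 - c (i + 1)) / real i" using rec[of i] that by simp
    then show ?thesis using that by (simp add: pos_le_divide_eq algebra_simps)
  qed
  then show "1 \<le> i \<Longrightarrow> i < \<Delta> \<Longrightarrow> real i * c i + c (i + 1) \<le> 1" for i .
  have decreasing: "c (Suc n) \<le> c n" if "1 \<le> n" "n < \<Delta>" for n
  proof -
    have bound: "c (Suc n) \<le> 2 / (2 * real (Suc n) + 1)" using bounds[of "Suc n"] that by simp
    have "real (Suc n) * c (Suc n) \<le> real (Suc n) * (2 / (2 * real (Suc n) + 1))"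
      using bound by (intro mult_left_mono) auto
    also have "\<dots> \<le> 1" by (simp add: field_simps)
    finally have "c (Suc n) \<le> (1 - c (Suc n)) / real n"
      using that by (simp add: pos_le_divide_eq algebra_simps)
    moreover have "2 / (2 * real (Suc n) + 1) \<le> 2 / (2 * real n + 1)"
      by (intro divide_left_mono) auto
    ultimately show ?thesis using rec[of n] bound that by simp
  qed
  show "c j \<le> c i" if "1 \<le> i" "i \<le> j" "j \<le> \<Delta>" for i j
    using that(2)
  proof (induction rule: inc_induct)
    case (step n)
    then show ?case using decreasing[of n] that by simp
  qed simp
  show "0 \<le> c i" if "1 \<le> i" "i \<le> \<Delta>" for i
    using bounds[OF that] by simp
  show "(2 * real i + 1) * c i \<le> 2" if "1 \<le> i" "i \<le> \<Delta>" for i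
    using bounds[OF that] by (simp add: pos_le_divide_eq mult.commute)
qed

lemma closed_neighbours_eq_if_connected:
  assumes conn: "connected_graph V E" and v: "v \<in> V" and complete: "in_complete_component V E v"
  shows "closed_neighbours V E v = V"
proof
  show "closed_neighbours V E v \<subseteq> V" using closed_neighbours_subset[OF v] .
  show "V \<subseteq> closed_neighbours V E v"
  proof
    fix y assume "y \<in> V"
    then have "(\<lambda>x y. x \<in> V \<and> y \<in> V \<and> adj E x y)\<^sup>*\<^sup>* v y"
      using conn v by (simp add: connected_graph_def)
    then show "y \<in> closed_neighbours V E v"
    proof (induction rule: rtranclp_induct)
      case base
      then show ?case by (simp add: closed_neighbours_def)
    next
      case (step a b)
      have "closed_neighbours V E a = closed_neighbours V E v"
      proof (cases "a = v")
        case False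
        then have "a \<in> neighbours V E v" using step.IH by (simp add: closed_neighbours_def)
        then show ?thesis using complete unfolding in_complete_component_def by blast
      qed simp
      moreover have "b \<in> closed_neighbours V E a"
        using step.hyps by (simp add: closed_neighbours_def neighbours_def)
      ultimately show ?case by simp
    qed
  qed
qed

lemma no_complete_component_if_in_G_Delta:
  assumes G: "in_G_Delta \<Delta> V E" and v: "v \<in> V"
  shows "\<not> in_complete_component V E v"
proof
  assume complete: "in_complete_component V E v"
  have fin: "finite V" and noloop: "\<forall>v\<in>V. {v} \<notin> E" and conn: "connected_graph V E"
    using G by (auto simp: in_G_Delta_def simple_graph_def)
  have V_eq: "closed_neighbours V E v = V" using closed_neighbours_eq_if_connected[OF conn v complete] .
  have "\<Delta> \<in> degree V E ` V"
    using G fin v unfolding in_G_Delta_def max_degree_def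
    by (metis Max_in empty_iff finite_imageI image_is_empty)
  then have "degree V E v = \<Delta>"
    using degree_eq_if_in_complete_component[OF fin noloop complete _ v] V_eq by auto
  then have "card V = \<Delta> + 1" using card_closed_neighbours[OF fin] noloop v V_eq by metis
  moreover have "complete_graph V E"
    unfolding complete_graph_def
  proof (intro ballI impI)
    fix a b assume a: "a \<in> V" and b: "b \<in> V" and "a \<noteq> b"
    have "closed_neighbours V E a = V"
    proof (cases "a = v")
      case False
      then have "a \<in> neighbours V E v" using a V_eq by (auto simp: closed_neighbours_def)
      then show ?thesis using complete V_eq unfolding in_complete_component_def by blast
    qed (simp add: V_eq)
    then show "adj E a b" using b \<open>a \<noteq> b\<close> by (auto simp: closed_neighbours_def neighbours_def)
  qed
  ultimately show False using G by (simp add: in_G_Delta_def is_complete_on_def)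
qed

lemma sum_over_degree_classes:
  assumes "finite V" and "finite I" and "degree V E ` V \<subseteq> I"
  shows "(\<Sum>i\<in>I. g i * real (card (V_deg V E i))) = (\<Sum>v\<in>V. g (degree V E v))"
proof -
  have "(\<Sum>i\<in>I. g i * real (card (V_deg V E i))) = (\<Sum>i\<in>I. \<Sum>v\<in>V_deg V E i. g (degree V E v))"
    by (intro sum.cong) (simp_all add: V_deg_def)
  also have "\<dots> = (\<Sum>v\<in>V. g (degree V E v))"
    using sum.group[OF assms, of "\<lambda>v. g (degree V E v)"] by (simp add: V_deg_def)
  finally show ?thesis .
qed

lemma card_le_independence_number:
  assumes "finite V" and "independent_set V E S"
  shows "card S \<le> independence_number V E"
proof -
  have "{S. independent_set V E S} \<subseteq> Pow V" by (auto simp: independent_set_def)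
  then have "finite {S. independent_set V E S}" using assms(1) by (simp add: finite_subset)
  then show ?thesis unfolding independence_number_def using assms(2) by (intro Max_ge) auto
qed

theorem corollary1:
  fixes \<Delta> :: nat and V :: "'a set" and E :: "'a set set" and c :: "nat \<Rightarrow> real"
  assumes "\<Delta> \<ge> 3"
    and "in_G_Delta \<Delta> V E"
    and "0 < c \<Delta>" and "c \<Delta> \<le> 2 / (2 * real \<Delta> + 1)"
    and "\<And>i. 1 \<le> i \<Longrightarrow> i \<le> \<Delta> - 1 \<Longrightarrow>
           c i = min ((1 - c (i + 1)) / real i) (2 / (2 * real i + 1))"
  shows "real (independence_number V E) \<ge> (\<Sum>i = 1..\<Delta>. c i * real (card (V_deg V E i)))"
proof -
  interpret degree_weights \<Delta> c using degree_weights_min_recursion assms(3-5) by blast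
  have fin: "finite V" and noloop: "\<forall>v\<in>V. {v} \<notin> E"
    using assms(2) by (auto simp: in_G_Delta_def simple_graph_def)
  have deg_le: "\<forall>v\<in>V. degree V E v \<le> \<Delta>"
    using assms(2) fin by (auto simp: in_G_Delta_def max_degree_def)
  have no_complete: "\<forall>v\<in>V. \<not> in_complete_component V E v"
    using no_complete_component_if_in_G_Delta[OF assms(2)] by blast
  then have "admissible V E (\<lambda>v. c (degree V E v))" by (simp add: admissible_def)
  then obtain S where S: "independent_set V E S" "(\<Sum>v\<in>V. c (degree V E v)) \<le> real (card S)"
    using exists_independent_set_weight[OF fin noloop deg_le] by blast
  have "degree V E ` V \<subseteq> {1..\<Delta>}"
    using deg_le no_complete degree_ge_1_if_not_in_complete_component[OF fin] by auto
  then have "(\<Sum>i = 1..\<Delta>. c i * real (card (V_deg V E i))) = (\<Sum>v\<in>V. c (degree V E v))"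
    using sum_over_degree_classes[OF fin] by blast
  also have "\<dots> \<le> real (independence_number V E)"
    using S card_le_independence_number[OF fin S(1)] by linarith
  finally show ?thesis .
qed

end
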